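(* Let $\Omega\subset\mathbb{R}^2$ be open, $\lambda>0$, and let $u\in L^2(\Omega)$ satisfy $-\Delta u=\lambda u$ in $\Omega$. Suppose $\Gamma^+,\Gamma^-\subset\Omega$ are two nodal lines of $u$ (line segments on which $u=0$) with $\Gamma^+\cap\Gamma^-=\{\mathbf{x}_0\}$, $\mathbf{x}_0\in\Omega$, forming at $\mathbf{x}_0$ the angle $\angle(\Gamma^+,\Gamma^-)=\alpha\cdot 2\pi$, where $\alpha\in(0,1)$ is irrational. Then $\mathrm{Vani}(u;\mathbf{x}_0)=+\infty$.
   Context: No boundary condition is imposed on $\partial\Omega$; $u$ is real-analytic in $\Omega$. Vanishing order: writing the Taylor expansion $u(\mathbf{x}_0+\mathbf{y})=\sum_{m\ge 0}P_m(\mathbf{y})$ with $P_m$ a homogeneous polynomial of degree $m$, $\mathrm{Vani}(u;\mathbf{x}_0)$ is the smallest $m$ with $P_m\not\equiv 0$, and $\mathrm{Vani}(u;\mathbf{x}_0)=+\infty$ if all $P_m\equiv 0$. *)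

theory Defs
  imports "HOL-Analysis.Analysis" "HOL-Library.Extended_Nat"
begin

definition pd :: "2 \<Rightarrow> (real^2 \<Rightarrow> real) \<Rightarrow> real^2 \<Rightarrow> real" where
  "pd k f x = deriv (\<lambda>t. f (x + t *\<^sub>R axis k 1)) 0"

fun iter_pd :: "2 list \<Rightarrow> (real^2 \<Rightarrow> real) \<Rightarrow> real^2 \<Rightarrow> real" where
  "iter_pd [] f = f"
| "iter_pd (k # ks) f = pd k (iter_pd ks f)"

definition smooth_on :: "(real^2) set \<Rightarrow> (real^2 \<Rightarrow> real) \<Rightarrow> bool" where
  "smooth_on S f \<longleftrightarrow> (\<forall>ks. iter_pd ks f differentiable_on S)"

definition laplacian :: "(real^2 \<Rightarrow> real) \<Rightarrow> real^2 \<Rightarrow> real" where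
  "laplacian f x = pd 1 (pd 1 f) x + pd 2 (pd 2 f) x"

definition taylor_hom :: "(real^2 \<Rightarrow> real) \<Rightarrow> real^2 \<Rightarrow> nat \<Rightarrow> real^2 \<Rightarrow> real" where
  "taylor_hom u x0 m y =
     (\<Sum>i\<le>m. ((pd 1 ^^ i) ((pd 2 ^^ (m - i)) u) x0) / (fact i * fact (m - i))
              * (y$1) ^ i * (y$2) ^ (m - i))"

definition vani :: "(real^2 \<Rightarrow> real) \<Rightarrow> real^2 \<Rightarrow> enat" where
  "vani u x0 = (if \<exists>m y. taylor_hom u x0 m y \<noteq> 0
                then enat (LEAST m. \<exists>y. taylor_hom u x0 m y \<noteq> 0) else \<infinity>)"

definition rot :: "real \<Rightarrow> real^2 \<Rightarrow> real^2" where
  "rot \<theta> v = vector [cos \<theta> * v$1 - sin \<theta> * v$2, sin \<theta> * v$1 + cos \<theta> * v$2]"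

end

theory Submission
  imports Defs
begin

text \<open>Along a ray x0 + t v the m-th derivative of u at t = 0 is the binomial sum of the mixed
  partials of order m at x0; since u vanishes on both segments, these sums vanish in both
  directions v = p - x0 and w = q - x0. Differentiating the eigenvalue equation gives
  c(i+2, j) + c(i, j+2) = -\<lambda> c(i, j) for the mixed partials at x0, so by induction on the
  order, once all lower orders vanish the order-n coefficients satisfy a(i+2) = -a(i). Such
  a binomial sum at v is Re (A z ^ n) with z = \<i> v$1 + v$2, and the rotation taking v to w
  multiplies z by a rotation by -2\<pi>\<alpha>; vanishing at both leaves sin (2\<pi>n\<alpha>) Im (A z ^ n) = 0,
  and irrationality of \<alpha> forces A = 0.\<close>

section \<open>Partial derivatives along lines\<close>

lemma has_real_derivative_along_line:
  fixes g :: "real^2 \<Rightarrow> real"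
  assumes "(g has_derivative g') (at (y + s *\<^sub>R v))"
  shows "((\<lambda>t. g (y + t *\<^sub>R v)) has_real_derivative g' v) (at s)"
proof -
  have "((\<lambda>t. y + t *\<^sub>R v) has_derivative (\<lambda>t. t *\<^sub>R v)) (at s)"
    by (auto intro!: derivative_eq_intros)
  from has_derivative_compose[OF this assms]
  have "((\<lambda>t. g (y + t *\<^sub>R v)) has_derivative (\<lambda>t. g' (t *\<^sub>R v))) (at s)"
    by (simp add: o_def)
  moreover have "(\<lambda>t. g' (t *\<^sub>R v)) = (\<lambda>t. g' v * t)"
    using linear_scale[OF has_derivative_linear[OF assms]] by (auto simp: mult.commute)
  ultimately show ?thesis by (simp add: has_field_derivative_def)
qed

lemma pd_eq_derivative_axis:
  assumes "(g has_derivative g') (at x)"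
  shows "pd k g x = g' (axis k 1)"
  unfolding pd_def
  by (rule DERIV_imp_deriv, rule has_real_derivative_along_line) (use assms in simp)

lemma has_real_derivative_along_line_pd:
  fixes g :: "real^2 \<Rightarrow> real"
  assumes "g differentiable (at (y + s *\<^sub>R v))"
  shows "((\<lambda>t. g (y + t *\<^sub>R v)) has_real_derivative
           v$1 * pd 1 g (y + s *\<^sub>R v) + v$2 * pd 2 g (y + s *\<^sub>R v)) (at s)"
proof -
  obtain g' where g': "(g has_derivative g') (at (y + s *\<^sub>R v))"
    using assms differentiable_def by blast
  have l: "linear g'" by (rule has_derivative_linear[OF g'])
  have "v = v$1 *\<^sub>R axis 1 1 + v$2 *\<^sub>R axis 2 1"
    by (simp add: vec_eq_iff forall_2 axis_def)
  then have "g' v = g' (v$1 *\<^sub>R axis 1 1 + v$2 *\<^sub>R axis 2 1)" by (rule arg_cong)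
  also have "\<dots> = v$1 * g' (axis 1 1) + v$2 * g' (axis 2 1)"
    by (simp add: linear_add[OF l] linear_scale[OF l])
  finally have "g' v = v$1 * pd 1 g (y + s *\<^sub>R v) + v$2 * pd 2 g (y + s *\<^sub>R v)"
    by (simp add: pd_eq_derivative_axis[OF g'])
  with has_real_derivative_along_line[OF g'] show ?thesis by simp
qed

lemma has_real_derivative_along_axis:
  fixes g :: "real^2 \<Rightarrow> real"
  assumes "g differentiable (at (y + s *\<^sub>R axis k 1))"
  shows "((\<lambda>t. g (y + t *\<^sub>R axis k 1)) has_real_derivative pd k g (y + s *\<^sub>R axis k 1)) (at s)"
  using has_real_derivative_along_line_pd[OF assms] exhaust_2[of k] by (auto simp: axis_def)

lemma pd_cong:
  assumes "open S" "x \<in> S" "\<And>y. y \<in> S \<Longrightarrow> f y = g y"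
  shows "pd k f x = pd k g x"
  unfolding pd_def
proof (rule deriv_cong_ev)
  have "open ((\<lambda>t::real. x + t *\<^sub>R axis k 1) -` S)"
    by (rule continuous_open_vimage[OF assms(1)]) (intro continuous_intros)
  then have "eventually (\<lambda>t. x + t *\<^sub>R axis k 1 \<in> S) (nhds 0)"
    using eventually_nhds_in_open assms(2) by fastforce
  then show "eventually (\<lambda>t. f (x + t *\<^sub>R axis k 1) = g (x + t *\<^sub>R axis k 1)) (nhds 0)"
    by eventually_elim (use assms in auto)
qed simp

lemma pd_linear_combination:
  assumes "f differentiable (at x)" "g differentiable (at x)"
  shows "pd k (\<lambda>y. a * f y + b * g y) x = a * pd k f x + b * pd k g x"
proof -
  have "((\<lambda>t. a * f (x + t *\<^sub>R axis k 1) + b * g (x + t *\<^sub>R axis k 1))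
          has_real_derivative a * pd k f x + b * pd k g x) (at 0)"
    using has_real_derivative_along_axis[of _ x 0 k] assms by (auto intro!: DERIV_add DERIV_cmult)
  then show ?thesis by (simp add: pd_def[of k "\<lambda>y. a * f y + b * g y"] DERIV_imp_deriv)
qed

lemma iter_pd_append: "iter_pd (ks @ ls) f = iter_pd ks (iter_pd ls f)"
  by (induction ks) auto

lemma smooth_on_pd: "smooth_on S f \<Longrightarrow> smooth_on S (pd k f)"
  unfolding smooth_on_def by (metis iter_pd.simps iter_pd_append)

lemma smooth_on_funpow_pd: "smooth_on S f \<Longrightarrow> smooth_on S ((pd k ^^ n) f)"
  by (induction n) (auto intro: smooth_on_pd)

lemma smooth_on_imp_differentiable_at:
  "smooth_on S f \<Longrightarrow> open S \<Longrightarrow> x \<in> S \<Longrightarrow> f differentiable (at x)"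
  unfolding smooth_on_def by (metis differentiable_on_eq_differentiable_at iter_pd.simps(1))

lemma smooth_on_imp_isCont: "smooth_on S f \<Longrightarrow> open S \<Longrightarrow> x \<in> S \<Longrightarrow> isCont f x"
  using smooth_on_imp_differentiable_at differentiable_imp_continuous_within by blast

section \<open>Symmetry of mixed partial derivatives\<close>

lemma dist_add_two_axes_le:
  fixes x :: "real^2"
  assumes "0 \<le> s" "s \<le> h" "0 \<le> t" "t \<le> h"
  shows "dist (x + s *\<^sub>R axis k 1 + t *\<^sub>R axis l 1) x \<le> 2 * h"
proof -
  have "norm (s *\<^sub>R axis k (1::real) + t *\<^sub>R axis l 1)
      \<le> norm (s *\<^sub>R axis k (1::real)) + norm (t *\<^sub>R axis l (1::real))"
    by (rule norm_triangle_ineq)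
  also have "\<dots> = s + t" using assms by simp
  finally show ?thesis using assms by (simp add: dist_norm add.assoc)
qed

lemma second_difference_mean_value:
  fixes f :: "real^2 \<Rightarrow> real"
  assumes sm: "smooth_on S f" and S: "open S" and B: "ball x \<delta> \<subseteq> S"
    and h: "0 < h" "2 * h < \<delta>"
  obtains s t where "0 < s" "s < h" "0 < t" "t < h"
    "f (x + h *\<^sub>R axis k 1 + h *\<^sub>R axis l 1) - f (x + h *\<^sub>R axis k 1)
       - f (x + h *\<^sub>R axis l 1) + f x
     = h * h * pd l (pd k f) (x + s *\<^sub>R axis k 1 + t *\<^sub>R axis l 1)"
proof -
  have inS: "x + s *\<^sub>R axis k 1 + t *\<^sub>R axis l 1 \<in> S"
    if "0 \<le> s" "s \<le> h" "0 \<le> t" "t \<le> h" for s t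
    using dist_add_two_axes_le[OF that, of x k l] h B by (auto simp: dist_commute)
  define \<phi> where "\<phi> s = f (x + s *\<^sub>R axis k 1 + h *\<^sub>R axis l 1) - f (x + s *\<^sub>R axis k 1)" for s
  have "\<exists>z. 0 < z \<and> z < h \<and> \<phi> h - \<phi> 0 = (h - 0) *
      (pd k f (x + z *\<^sub>R axis k 1 + h *\<^sub>R axis l 1) - pd k f (x + z *\<^sub>R axis k 1))"
  proof (rule MVT2[OF h(1)])
    fix s assume s: "0 \<le> s" "s \<le> h"
    have "f differentiable (at ((x + h *\<^sub>R axis l 1) + s *\<^sub>R axis k 1))"
      using inS[of s h] s h smooth_on_imp_differentiable_at[OF sm S] by (simp add: algebra_simps)
    moreover have "f differentiable (at (x + s *\<^sub>R axis k 1))"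
      using inS[of s 0] s h smooth_on_imp_differentiable_at[OF sm S] by simp
    ultimately have "((\<lambda>s. f ((x + h *\<^sub>R axis l 1) + s *\<^sub>R axis k 1) - f (x + s *\<^sub>R axis k 1))
      has_real_derivative
      (pd k f ((x + h *\<^sub>R axis l 1) + s *\<^sub>R axis k 1) - pd k f (x + s *\<^sub>R axis k 1))) (at s)"
      by (intro DERIV_diff has_real_derivative_along_axis)
    then show "(\<phi> has_real_derivative
      (pd k f (x + s *\<^sub>R axis k 1 + h *\<^sub>R axis l 1) - pd k f (x + s *\<^sub>R axis k 1))) (at s)"
      unfolding \<phi>_def by (simp add: algebra_simps)
  qed
  then obtain z where z: "0 < z" "z < h" and eq1: "\<phi> h - \<phi> 0 = h *
      (pd k f (x + z *\<^sub>R axis k 1 + h *\<^sub>R axis l 1) - pd k f (x + z *\<^sub>R axis k 1))" by auto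
  define \<psi> where "\<psi> t = pd k f (x + z *\<^sub>R axis k 1 + t *\<^sub>R axis l 1)" for t
  have "\<exists>w. 0 < w \<and> w < h \<and>
      \<psi> h - \<psi> 0 = (h - 0) * pd l (pd k f) (x + z *\<^sub>R axis k 1 + w *\<^sub>R axis l 1)"
  proof (rule MVT2[OF h(1)])
    fix t assume t: "0 \<le> t" "t \<le> h"
    have "pd k f differentiable (at (x + z *\<^sub>R axis k 1 + t *\<^sub>R axis l 1))"
      using inS[of z t] t z smooth_on_imp_differentiable_at[OF smooth_on_pd[OF sm] S] by simp
    then show "(\<psi> has_real_derivative pd l (pd k f) (x + z *\<^sub>R axis k 1 + t *\<^sub>R axis l 1)) (at t)"
      unfolding \<psi>_def by (rule has_real_derivative_along_axis)
  qed
  then obtain w where w: "0 < w" "w < h" and eq2: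
    "\<psi> h - \<psi> 0 = h * pd l (pd k f) (x + z *\<^sub>R axis k 1 + w *\<^sub>R axis l 1)" by auto
  have "f (x + h *\<^sub>R axis k 1 + h *\<^sub>R axis l 1) - f (x + h *\<^sub>R axis k 1)
       - f (x + h *\<^sub>R axis l 1) + f x = \<phi> h - \<phi> 0"
    unfolding \<phi>_def by simp
  also have "\<dots> = h * (\<psi> h - \<psi> 0)" using eq1 unfolding \<psi>_def by simp
  also have "\<dots> = h * h * pd l (pd k f) (x + z *\<^sub>R axis k 1 + w *\<^sub>R axis l 1)"
    using eq2 by simp
  finally show ?thesis using z w that by blast
qed

text \<open>Both mixed partials are limits of the same second difference quotient divided by h * h.\<close>
lemma pd_pd_commute:
  fixes f :: "real^2 \<Rightarrow> real"
  assumes sm: "smooth_on S f" and S: "open S" and x: "x \<in> S"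
  shows "pd 1 (pd 2 f) x = pd 2 (pd 1 f) x"
proof (rule ccontr)
  define F where "F = pd 2 (pd 1 f)"
  define G where "G = pd 1 (pd 2 f)"
  assume "pd 1 (pd 2 f) x \<noteq> pd 2 (pd 1 f) x"
  then have e: "\<bar>F x - G x\<bar> / 2 > 0" unfolding F_def G_def by auto
  have "isCont F x" "isCont G x" unfolding F_def G_def
    by (rule smooth_on_imp_isCont[OF smooth_on_pd[OF smooth_on_pd[OF sm]] S x])+
  with e obtain d1 d2 where d: "d1 > 0" "d2 > 0"
    "\<And>y. dist y x < d1 \<Longrightarrow> dist (F y) (F x) < \<bar>F x - G x\<bar> / 2"
    "\<And>y. dist y x < d2 \<Longrightarrow> dist (G y) (G x) < \<bar>F x - G x\<bar> / 2"
    unfolding continuous_at_eps_delta by metis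
  obtain \<delta> where \<delta>: "\<delta> > 0" "ball x \<delta> \<subseteq> S"
    using S x open_contains_ball by blast
  define h where "h = min \<delta> (min d1 d2) / 4"
  have h: "0 < h" "2 * h < \<delta>" "2 * h < d1" "2 * h < d2"
    using \<delta> d unfolding h_def by auto
  obtain s t where st: "0 < s" "s < h" "0 < t" "t < h" and eq1:
     "f (x + h *\<^sub>R axis 1 1 + h *\<^sub>R axis 2 1) - f (x + h *\<^sub>R axis 1 1)
       - f (x + h *\<^sub>R axis 2 1) + f x
     = h * h * F (x + s *\<^sub>R axis 1 1 + t *\<^sub>R axis 2 1)"
    using second_difference_mean_value[OF sm S \<delta>(2) h(1,2), of 1 2] unfolding F_def by blast
  obtain s' t' where st': "0 < s'" "s' < h" "0 < t'" "t' < h" and eq2: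
     "f (x + h *\<^sub>R axis 2 1 + h *\<^sub>R axis 1 1) - f (x + h *\<^sub>R axis 2 1)
       - f (x + h *\<^sub>R axis 1 1) + f x
     = h * h * G (x + s' *\<^sub>R axis 2 1 + t' *\<^sub>R axis 1 1)"
    using second_difference_mean_value[OF sm S \<delta>(2) h(1,2), of 2 1] unfolding G_def by blast
  have "h * h * F (x + s *\<^sub>R axis 1 1 + t *\<^sub>R axis 2 1)
      = h * h * G (x + s' *\<^sub>R axis 2 1 + t' *\<^sub>R axis 1 1)"
    using eq1 eq2 by (simp add: algebra_simps)
  then have FG: "F (x + s *\<^sub>R axis 1 1 + t *\<^sub>R axis 2 1) = G (x + s' *\<^sub>R axis 2 1 + t' *\<^sub>R axis 1 1)"
    using h by simp
  have "dist (F (x + s *\<^sub>R axis 1 1 + t *\<^sub>R axis 2 1)) (F x) < \<bar>F x - G x\<bar> / 2"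
    using d(3) dist_add_two_axes_le[of s h t x 1 2] st h by force
  moreover have "dist (G (x + s' *\<^sub>R axis 2 1 + t' *\<^sub>R axis 1 1)) (G x) < \<bar>F x - G x\<bar> / 2"
    using d(4) dist_add_two_axes_le[of s' h t' x 2 1] st' h by force
  ultimately show False using FG unfolding dist_real_def by (simp add: abs_if split: if_splits)
qed

section \<open>Mixed partials of an eigenfunction\<close>

definition pd_mixed :: "nat \<Rightarrow> nat \<Rightarrow> (real^2 \<Rightarrow> real) \<Rightarrow> real^2 \<Rightarrow> real" where
  "pd_mixed i j f = (pd 1 ^^ i) ((pd 2 ^^ j) f)"

lemma funpow_pd_cong:
  assumes "open S" "\<And>y. y \<in> S \<Longrightarrow> f y = g y" "x \<in> S"
  shows "(pd k ^^ n) f x = (pd k ^^ n) g x"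
  using assms(3)
proof (induction n arbitrary: x)
  case (Suc n)
  then show ?case using pd_cong[OF assms(1) Suc.prems, of "(pd k ^^ n) f" "(pd k ^^ n) g"] by simp
qed (use assms in simp)

lemma pd_mixed_cong:
  assumes "open S" "\<And>y. y \<in> S \<Longrightarrow> f y = g y" "x \<in> S"
  shows "pd_mixed i j f x = pd_mixed i j g x"
  unfolding pd_mixed_def
  by (rule funpow_pd_cong[OF assms(1) _ assms(3)], rule funpow_pd_cong[OF assms(1) assms(2)])

lemma funpow_pd_linear_combination:
  assumes S: "open S" and f: "smooth_on S f" and g: "smooth_on S g" and x: "x \<in> S"
  shows "(pd k ^^ n) (\<lambda>y. a * f y + b * g y) x = a * (pd k ^^ n) f x + b * (pd k ^^ n) g x"
  using x
proof (induction n arbitrary: x)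
  case (Suc n)
  have "(pd k ^^ Suc n) (\<lambda>y. a * f y + b * g y) x
     = pd k (\<lambda>y. a * (pd k ^^ n) f y + b * (pd k ^^ n) g y) x"
    using pd_cong[OF S Suc.prems, of "(pd k ^^ n) (\<lambda>y. a * f y + b * g y)"] Suc.IH by simp
  also have "\<dots> = a * (pd k ^^ Suc n) f x + b * (pd k ^^ Suc n) g x"
    using pd_linear_combination smooth_on_imp_differentiable_at[OF _ S Suc.prems]
      smooth_on_funpow_pd f g by simp
  finally show ?case .
qed simp

lemma pd_mixed_linear_combination:
  assumes S: "open S" and f: "smooth_on S f" and g: "smooth_on S g" and x: "x \<in> S"
  shows "pd_mixed i j (\<lambda>y. a * f y + b * g y) x = a * pd_mixed i j f x + b * pd_mixed i j g x"
proof -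
  have "pd_mixed i j (\<lambda>y. a * f y + b * g y) x
      = (pd 1 ^^ i) (\<lambda>y. a * (pd 2 ^^ j) f y + b * (pd 2 ^^ j) g y) x"
    unfolding pd_mixed_def
    by (rule funpow_pd_cong[OF S _ x], rule funpow_pd_linear_combination[OF S f g])
  also have "\<dots> = a * pd_mixed i j f x + b * pd_mixed i j g x"
    unfolding pd_mixed_def
    by (rule funpow_pd_linear_combination[OF S smooth_on_funpow_pd[OF f] smooth_on_funpow_pd[OF g] x])
  finally show ?thesis .
qed

lemma pd2_funpow_pd1_commute:
  assumes S: "open S" and g: "smooth_on S g" and x: "x \<in> S"
  shows "pd 2 ((pd 1 ^^ i) g) x = (pd 1 ^^ i) (pd 2 g) x"
  using x
proof (induction i arbitrary: x)
  case (Suc i)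
  have "pd 2 ((pd 1 ^^ Suc i) g) x = pd 1 (pd 2 ((pd 1 ^^ i) g)) x"
    using pd_pd_commute[OF smooth_on_funpow_pd[OF g] S Suc.prems] by simp
  also have "\<dots> = pd 1 ((pd 1 ^^ i) (pd 2 g)) x"
    by (rule pd_cong[OF S Suc.prems], rule Suc.IH)
  finally show ?case by simp
qed simp

lemma funpow_pd2_pd1_commute:
  assumes S: "open S" and g: "smooth_on S g" and x: "x \<in> S"
  shows "(pd 2 ^^ j) (pd 1 g) x = pd 1 ((pd 2 ^^ j) g) x"
  using x
proof (induction j arbitrary: x)
  case (Suc j)
  have "(pd 2 ^^ Suc j) (pd 1 g) x = pd 2 (pd 1 ((pd 2 ^^ j) g)) x"
    using pd_cong[OF S Suc.prems, of "(pd 2 ^^ j) (pd 1 g)"] Suc.IH by simp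
  also have "\<dots> = pd 1 ((pd 2 ^^ Suc j) g) x"
    using pd_pd_commute[OF smooth_on_funpow_pd[OF g] S Suc.prems] by simp
  finally show ?case .
qed simp

lemma pd1_pd_mixed: "pd 1 (pd_mixed i j f) x = pd_mixed (Suc i) j f x"
  unfolding pd_mixed_def by simp

lemma pd2_pd_mixed:
  assumes "open S" "smooth_on S f" "x \<in> S"
  shows "pd 2 (pd_mixed i j f) x = pd_mixed i (Suc j) f x"
  unfolding pd_mixed_def using pd2_funpow_pd1_commute[OF assms(1) smooth_on_funpow_pd assms(3)] assms(2)
  by simp

lemma smooth_on_pd_mixed: "smooth_on S f \<Longrightarrow> smooth_on S (pd_mixed i j f)"
  unfolding pd_mixed_def by (intro smooth_on_funpow_pd)

lemma pd_mixed_pd11: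
  assumes S: "open S" and f: "smooth_on S f" and x: "x \<in> S"
  shows "pd_mixed i j (pd 1 (pd 1 f)) x = pd_mixed (Suc (Suc i)) j f x"
proof -
  have "pd_mixed i j (pd 1 (pd 1 f)) x = (pd 1 ^^ i) (pd 1 (pd 1 ((pd 2 ^^ j) f))) x"
    unfolding pd_mixed_def
  proof (rule funpow_pd_cong[OF S _ x])
    fix y assume y: "y \<in> S"
    have "(pd 2 ^^ j) (pd 1 (pd 1 f)) y = pd 1 ((pd 2 ^^ j) (pd 1 f)) y"
      by (rule funpow_pd2_pd1_commute[OF S smooth_on_pd[OF f] y])
    also have "\<dots> = pd 1 (pd 1 ((pd 2 ^^ j) f)) y"
      by (rule pd_cong[OF S y], rule funpow_pd2_pd1_commute[OF S f])
    finally show "(pd 2 ^^ j) (pd 1 (pd 1 f)) y = pd 1 (pd 1 ((pd 2 ^^ j) f)) y" .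
  qed
  then show ?thesis
    unfolding pd_mixed_def by (simp add: funpow_Suc_right del: funpow.simps)
qed

lemma pd_mixed_pd22: "pd_mixed i j (pd 2 (pd 2 f)) x = pd_mixed i (Suc (Suc j)) f x"
  unfolding pd_mixed_def by (simp add: funpow_Suc_right del: funpow.simps)

lemma pd_mixed_eigenfunction_recurrence:
  assumes S: "open S" and f: "smooth_on S f"
    and eigen: "\<forall>x\<in>S. - laplacian f x = lam * f x" and x: "x \<in> S"
  shows "pd_mixed (Suc (Suc i)) j f x + pd_mixed i (Suc (Suc j)) f x = - lam * pd_mixed i j f x"
proof -
  have "smooth_on S (pd 1 (pd 1 f))" "smooth_on S (pd 2 (pd 2 f))"
    by (intro smooth_on_pd f)+
  then have "pd_mixed (Suc (Suc i)) j f x + pd_mixed i (Suc (Suc j)) f x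
      = pd_mixed i j (\<lambda>y. 1 * pd 1 (pd 1 f) y + 1 * pd 2 (pd 2 f) y) x"
    using pd_mixed_linear_combination[OF S _ _ x, of _ _ i j 1 1]
      pd_mixed_pd11[OF S f x] pd_mixed_pd22 by simp
  also have "\<dots> = pd_mixed i j (\<lambda>y. (- lam) * f y + 0 * f y) x"
    by (rule pd_mixed_cong[OF S _ x]) (use eigen in \<open>force simp: laplacian_def\<close>)
  also have "\<dots> = - lam * pd_mixed i j f x"
    using pd_mixed_linear_combination[OF S f f x, of i j "- lam" 0] by simp
  finally show ?thesis .
qed

section \<open>Derivatives along a ray\<close>

lemma sum_binomial_Pascal:
  fixes a :: "nat \<Rightarrow> nat \<Rightarrow> real"
  shows "(\<Sum>i\<le>m. real (m choose i) * x^i * y^(m-i) * (x * a (Suc i) (m-i) + y * a i (Suc (m-i))))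
       = (\<Sum>i\<le>Suc m. real (Suc m choose i) * x^i * y^(Suc m - i) * a i (Suc m - i))"
proof -
  define F where "F i = x^i * y^(Suc m - i) * a i (Suc m - i)" for i
  have "(\<Sum>i\<le>m. real (m choose i) * x^i * y^(m-i) * (x * a (Suc i) (m-i) + y * a i (Suc (m-i))))
     = (\<Sum>i\<le>m. real (m choose i) * F (Suc i)) + (\<Sum>i\<le>m. real (m choose i) * F i)"
    unfolding F_def sum.distrib[symmetric]
    by (rule sum.cong) (auto simp: algebra_simps Suc_diff_le)
  moreover have "(\<Sum>i\<le>Suc m. real (Suc m choose i) * F i)
      = F 0 + (\<Sum>i\<le>m. real (m choose i) * F (Suc i)) + (\<Sum>i\<le>m. real (m choose Suc i) * F (Suc i))"
    by (subst sum.atMost_Suc_shift) (simp add: sum.distrib algebra_simps)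
  moreover have "F 0 + (\<Sum>i\<le>m. real (m choose Suc i) * F (Suc i)) = (\<Sum>i\<le>Suc m. real (m choose i) * F i)"
    by (subst sum.atMost_Suc_shift) simp
  moreover have "(\<Sum>i\<le>Suc m. real (m choose i) * F i) = (\<Sum>i\<le>m. real (m choose i) * F i)"
    by simp
  ultimately have "(\<Sum>i\<le>m. real (m choose i) * x^i * y^(m-i) * (x * a (Suc i) (m-i) + y * a i (Suc (m-i))))
      = (\<Sum>i\<le>Suc m. real (Suc m choose i) * F i)"
    by linarith
  then show ?thesis unfolding F_def by (simp add: mult.assoc)
qed

text \<open>The m-th derivative of t \<mapsto> f (y + t v) at t = 0, written out by the binomial formula.\<close>
definition dir_deriv :: "(real^2 \<Rightarrow> real) \<Rightarrow> real^2 \<Rightarrow> nat \<Rightarrow> real^2 \<Rightarrow> real" where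
  "dir_deriv f v m y = (\<Sum>i\<le>m. real (m choose i) * v$1^i * v$2^(m-i) * pd_mixed i (m-i) f y)"

lemma has_real_derivative_dir_deriv:
  assumes S: "open S" and f: "smooth_on S f" and y: "x0 + t *\<^sub>R v \<in> S"
  shows "((\<lambda>s. dir_deriv f v m (x0 + s *\<^sub>R v)) has_real_derivative
            dir_deriv f v (Suc m) (x0 + t *\<^sub>R v)) (at t)"
proof -
  let ?y = "x0 + t *\<^sub>R v"
  have "((\<lambda>s. dir_deriv f v m (x0 + s *\<^sub>R v)) has_real_derivative
     (\<Sum>i\<le>m. real (m choose i) * v$1^i * v$2^(m-i) *
        (v$1 * pd 1 (pd_mixed i (m-i) f) ?y + v$2 * pd 2 (pd_mixed i (m-i) f) ?y))) (at t)"
    unfolding dir_deriv_def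
    by (intro DERIV_sum DERIV_cmult has_real_derivative_along_line_pd
        smooth_on_imp_differentiable_at[OF smooth_on_pd_mixed[OF f] S y])
  also have "(\<Sum>i\<le>m. real (m choose i) * v$1^i * v$2^(m-i) *
        (v$1 * pd 1 (pd_mixed i (m-i) f) ?y + v$2 * pd 2 (pd_mixed i (m-i) f) ?y))
     = (\<Sum>i\<le>m. real (m choose i) * v$1^i * v$2^(m-i) *
        (v$1 * pd_mixed (Suc i) (m-i) f ?y + v$2 * pd_mixed i (Suc (m-i)) f ?y))"
    using pd1_pd_mixed pd2_pd_mixed[OF S f y] by simp
  also have "\<dots> = dir_deriv f v (Suc m) ?y"
    unfolding dir_deriv_def by (rule sum_binomial_Pascal[where a = "\<lambda>i j. pd_mixed i j f ?y"])
  finally show ?thesis .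
qed

lemma dir_deriv_eq_0_on_segment:
  assumes S: "open S" and f: "smooth_on S f"
    and seg: "\<And>t. 0 \<le> t \<Longrightarrow> t \<le> 1 \<Longrightarrow> x0 + t *\<^sub>R v \<in> S"
    and zero: "\<And>t. 0 \<le> t \<Longrightarrow> t \<le> 1 \<Longrightarrow> f (x0 + t *\<^sub>R v) = 0"
    and t: "0 \<le> t" "t \<le> 1"
  shows "dir_deriv f v m (x0 + t *\<^sub>R v) = 0"
  using t
proof (induction m arbitrary: t)
  case 0
  then show ?case using zero by (simp add: dir_deriv_def pd_mixed_def)
next
  case (Suc m)
  define g where "g s = dir_deriv f v (Suc m) (x0 + s *\<^sub>R v)" for s
  have D: "((\<lambda>s. dir_deriv f v m (x0 + s *\<^sub>R v)) has_real_derivative g s) (at s)"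
    if "0 \<le> s" "s \<le> 1" for s
    unfolding g_def by (rule has_real_derivative_dir_deriv[OF S f seg[OF that]])
  have "continuous_on {0..1} g"
  proof (rule continuous_at_imp_continuous_on, intro ballI)
    fix s :: real assume "s \<in> {0..1}"
    then show "isCont g s"
      unfolding g_def using has_real_derivative_dir_deriv[OF S f seg, of s "Suc m"] DERIV_isCont
      by auto
  qed
  moreover have "g s = 0" if "0 < s" "s < 1" for s
  proof (rule DERIV_local_const[OF D[of s] _])
    show "\<forall>y. \<bar>s - y\<bar> < min s (1 - s) \<longrightarrow>
            dir_deriv f v m (x0 + s *\<^sub>R v) = dir_deriv f v m (x0 + y *\<^sub>R v)"
      using Suc.IH that by auto
  qed (use that in auto)
  ultimately have "g t = 0"
    by (intro continuous_constant_on_closure[of "{0<..<1}" g 0 t]) (use Suc.prems in auto)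
  then show ?case unfolding g_def .
qed

section \<open>Binomial sums under an irrational rotation\<close>

lemma alternating_recurrence_eq_Re:
  fixes a :: "nat \<Rightarrow> real"
  assumes rec: "\<And>i. i + 2 \<le> n \<Longrightarrow> a (Suc (Suc i)) = - a i" and i: "i \<le> n"
  shows "a i = Re (\<i> ^ i * Complex (a 0) (- a 1))"
  using i
proof (induction i rule: less_induct)
  case (less i)
  consider "i = 0" | "i = 1" | l where "i = Suc (Suc l)"
    by (metis One_nat_def nat.exhaust)
  then show ?case
  proof cases
    case 3
    have "a i = - a l" using rec[of l] less.prems 3 by simp
    also have "a l = Re (\<i> ^ l * Complex (a 0) (- a 1))"
      using less.IH[of l] less.prems 3 by simp
    finally show ?thesis using 3 by (simp add: power2_eq_square)
  qed simp_all
qed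

lemma sum_binomial_eq_Re_power:
  fixes a :: "nat \<Rightarrow> real"
  assumes "\<And>i. i \<le> n \<Longrightarrow> a i = Re (\<i> ^ i * A)"
  shows "(\<Sum>i\<le>n. real (n choose i) * y1^i * y2^(n-i) * a i)
       = Re (A * (\<i> * complex_of_real y1 + complex_of_real y2) ^ n)"
proof -
  have "Re (A * (\<i> * complex_of_real y1 + complex_of_real y2) ^ n)
      = Re (\<Sum>i\<le>n. complex_of_real (real (n choose i) * y1^i * y2^(n-i)) * (\<i> ^ i * A))"
    unfolding binomial_ring sum_distrib_left
    by (rule arg_cong[where f = Re], rule sum.cong) (auto simp: power_mult_distrib algebra_simps)
  then show ?thesis by (simp add: Re_sum assms)
qed

lemma sin_multiple_irrational_turn_neq_0:
  assumes "\<alpha> \<notin> \<rat>" "n \<noteq> 0"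
  shows "sin (real n * (\<alpha> * (2 * pi))) \<noteq> 0"
proof
  assume "sin (real n * (\<alpha> * (2 * pi))) = 0"
  then obtain i :: int where "real n * (\<alpha> * (2 * pi)) = of_int i * pi"
    by (auto simp: sin_zero_iff_int2)
  then have "\<alpha> = of_int i / (2 * real n)"
    using assms(2) pi_gt_zero by (simp add: field_simps)
  then have "\<alpha> \<in> \<rat>" by (simp add: Rats_divide Rats_mult)
  with assms show False by simp
qed

lemma alternating_coefficients_vanish:
  fixes a :: "nat \<Rightarrow> real" and v w :: "real^2"
  assumes rec: "\<And>i. i + 2 \<le> n \<Longrightarrow> a (Suc (Suc i)) = - a i"
    and v: "v \<noteq> 0" and w: "w = r *\<^sub>R rot (\<alpha> * (2 * pi)) v" and r: "r > 0"
    and irrational: "\<alpha> \<notin> \<rat>"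
    and sum_v: "(\<Sum>i\<le>n. real (n choose i) * v$1^i * v$2^(n-i) * a i) = 0"
    and sum_w: "(\<Sum>i\<le>n. real (n choose i) * w$1^i * w$2^(n-i) * a i) = 0"
    and i: "i \<le> n"
  shows "a i = 0"
proof (cases "n = 0")
  case True
  then show ?thesis using sum_v i by simp
next
  case False
  define A where "A = Complex (a 0) (- a 1)"
  have a_Re: "a i = Re (\<i> ^ i * A)" if "i \<le> n" for i
    unfolding A_def by (rule alternating_recurrence_eq_Re[of n a, OF rec that])
  define \<theta> where "\<theta> = \<alpha> * (2 * pi)"
  define z where "z = \<i> * complex_of_real (v$1) + complex_of_real (v$2)"
  define Z where "Z = A * z ^ n"
  have Re_Z: "Re Z = 0"
    using sum_v sum_binomial_eq_Re_power[OF a_Re, of n "v$1" "v$2"] unfolding Z_def z_def by simp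
  have "\<i> * complex_of_real (w$1) + complex_of_real (w$2) = complex_of_real r * cis (- \<theta>) * z"
    unfolding w z_def rot_def \<theta>_def by (simp add: complex_eq_iff cis.sel algebra_simps)
  then have "0 = Re (A * (complex_of_real r * cis (- \<theta>) * z) ^ n)"
    using sum_w sum_binomial_eq_Re_power[OF a_Re, of n "w$1" "w$2"] by simp
  also have "A * (complex_of_real r * cis (- \<theta>) * z) ^ n
      = complex_of_real (r ^ n) * (cis (- (real n * \<theta>)) * Z)"
  proof -
    have "cis (- \<theta>) ^ n = cis (- (real n * \<theta>))" by (simp add: Complex.DeMoivre)
    then show ?thesis unfolding Z_def by (simp add: power_mult_distrib algebra_simps)
  qed
  finally have "Re (cis (- (real n * \<theta>)) * Z) = 0" using r by simp
  then have "sin (real n * \<theta>) * Im Z = 0" using Re_Z by simp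
  moreover have "sin (real n * \<theta>) \<noteq> 0"
    unfolding \<theta>_def by (rule sin_multiple_irrational_turn_neq_0[OF irrational False])
  ultimately have "Z = 0" using Re_Z by (simp add: complex_eq_iff)
  moreover have "z \<noteq> 0"
  proof
    assume "z = 0"
    then have "v$1 = 0" "v$2 = 0" unfolding z_def by (simp_all add: complex_eq_iff)
    with v show False by (simp add: vec_eq_iff forall_2)
  qed
  ultimately have "A = 0" unfolding Z_def by simp
  then show ?thesis using a_Re[OF i] by simp
qed

lemma pd_mixed_eq_0_of_dir_derivs_eq_0:
  assumes S: "open S" and f: "smooth_on S f"
    and eigen: "\<forall>x\<in>S. - laplacian f x = lam * f x" and x0: "x0 \<in> S"
    and v: "v \<noteq> 0" and w: "w = r *\<^sub>R rot (\<alpha> * (2 * pi)) v" and r: "r > 0"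
    and irrational: "\<alpha> \<notin> \<rat>"
    and dir_v: "\<And>m. dir_deriv f v m x0 = 0" and dir_w: "\<And>m. dir_deriv f w m x0 = 0"
  shows "i \<le> n \<Longrightarrow> pd_mixed i (n - i) f x0 = 0"
proof (induction n arbitrary: i rule: less_induct)
  case (less n)
  define a where "a i = pd_mixed i (n - i) f x0" for i
  have "a (Suc (Suc i)) = - a i" if "i + 2 \<le> n" for i
  proof -
    have "pd_mixed (Suc (Suc i)) (n - 2 - i) f x0 + pd_mixed i (Suc (Suc (n - 2 - i))) f x0
        = - lam * pd_mixed i (n - 2 - i) f x0"
      by (rule pd_mixed_eigenfunction_recurrence[OF S f eigen x0])
    moreover have "pd_mixed i (n - 2 - i) f x0 = 0"
      using less.IH[of "n - 2" i] that by simp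
    moreover have "Suc (Suc (n - 2 - i)) = n - i" "n - 2 - i = n - Suc (Suc i)"
      using that by auto
    ultimately show ?thesis unfolding a_def by simp
  qed
  moreover have "(\<Sum>i\<le>n. real (n choose i) * v$1^i * v$2^(n-i) * a i) = 0"
    using dir_v[of n] unfolding dir_deriv_def a_def .
  moreover have "(\<Sum>i\<le>n. real (n choose i) * w$1^i * w$2^(n-i) * a i) = 0"
    using dir_w[of n] unfolding dir_deriv_def a_def .
  ultimately have "a i = 0"
    using alternating_coefficients_vanish[of n a v w r \<alpha> i] v w r irrational less.prems by blast
  then show ?case unfolding a_def .
qed

lemma closed_segment_point:
  assumes "0 \<le> t" "t \<le> 1"
  shows "x0 + t *\<^sub>R (p - x0) \<in> closed_segment x0 p"
proof -
  have "x0 + t *\<^sub>R (p - x0) = (1 - t) *\<^sub>R x0 + t *\<^sub>R p" by (simp add: algebra_simps)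
  then show ?thesis using assms unfolding in_segment(1) by blast
qed

theorem theorem2p1:
  fixes \<Omega> :: "(real^2) set" and u :: "real^2 \<Rightarrow> real" and lam \<alpha> :: real
    and x0 p q :: "real^2"
  assumes "open \<Omega>" and "lam > 0"
    and "smooth_on \<Omega> u"
    and "(\<lambda>x. (u x)\<^sup>2) integrable_on \<Omega>"
    and "\<forall>x\<in>\<Omega>. - laplacian u x = lam * u x"
    and "x0 \<in> \<Omega>" and "p \<noteq> x0" and "q \<noteq> x0"
    and "closed_segment x0 p \<subseteq> \<Omega>" and "closed_segment x0 q \<subseteq> \<Omega>"
    and "\<forall>x\<in>closed_segment x0 p. u x = 0" and "\<forall>x\<in>closed_segment x0 q. u x = 0"
    and "closed_segment x0 p \<inter> closed_segment x0 q = {x0}"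
    and "0 < \<alpha>" and "\<alpha> < 1" and "\<alpha> \<notin> \<rat>"
    and "\<exists>r>0. q - x0 = r *\<^sub>R rot (\<alpha> * (2 * pi)) (p - x0)"
  shows "vani u x0 = \<infinity>"
proof -
  obtain r where r: "r > 0" "q - x0 = r *\<^sub>R rot (\<alpha> * (2 * pi)) (p - x0)"
    using assms(17) by blast
  have dir_p: "dir_deriv u (p - x0) m x0 = 0" for m
    using dir_deriv_eq_0_on_segment[OF assms(1,3), of x0 "p - x0" 0 m]
      closed_segment_point[of _ x0 p] assms(9,11) by auto
  have dir_q: "dir_deriv u (q - x0) m x0 = 0" for m
    using dir_deriv_eq_0_on_segment[OF assms(1,3), of x0 "q - x0" 0 m]
      closed_segment_point[of _ x0 q] assms(10,12) by auto
  have "pd_mixed i (m - i) u x0 = 0" if "i \<le> m" for i m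
    using pd_mixed_eq_0_of_dir_derivs_eq_0[OF assms(1,3,5,6) _ r(2,1) assms(16) dir_p dir_q that]
      assms(7) by simp
  then have "taylor_hom u x0 m y = 0" for m y
    unfolding taylor_hom_def pd_mixed_def by simp
  then show ?thesis unfolding vani_def by simp
qed

end
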